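(* Let $n$ be a positive integer, $f:\mathbb{Z}_n\to\mathbb C$, and $T_f=\max_{A\in\mathcal A_n}|f(A)|$. For every positive integer $m\le n$, \[n^2T_f^2+\sum_{1\le k<m:\ k\mid n}\frac{m^2\phi(k)}{k}G_f(n/k)\ge\sum_{r\in\mathbb{Z}_n}|\widehat f(r)|^2\cdot\max\left(\frac{m^2\gcd(r,n)}{n},\,m\right).\]
   Context: An arithmetic progression in $\mathbb{Z}_n$ is a set $\{a+kd: 0\le k<l\}$ with $a,d\in\mathbb{Z}_n$ and $l$ an integer with $0\le l\le n/\gcd(n,d)$ (with $\gcd(0,n)=n$, and $\gcd(r,n)$ for $r\in\mathbb{Z}_n$ computed from any integer representative); $\mathcal A_n$ is the family of all of them. $f(A)=\sum_{x\in A}f(x)$. The Fourier transform is $\widehat f(s)=\sum_{x\in\mathbb{Z}_n}f(x)e^{-2\pi i xs/n}$. For a positive divisor $r$ of $n$ and $a\in\mathbb{Z}_n$, $g_f(a,r)=\sum_{x\in\mathbb{Z}_n:\,x=a+jr\text{ for some }j\in\mathbb{Z}_n}f(x)$ and $G_f(r)=\sum_{a=0}^{r-1}|g_f(a,r)|^2$. $\phi$ is Euler's totient function. *)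

theory Defs
  imports "HOL-Analysis.Analysis" "HOL-Number_Theory.Number_Theory"
begin

text \<open>Z_n is modelled by the residues {0..<n} (n > 0) with arithmetic mod n;
  a function on Z_n is a function nat => complex whose values on {0..<n} matter.\<close>

definition ap_family :: "nat \<Rightarrow> nat set set" where
  "ap_family n = {{(a + k * d) mod n | k. k < l} | a d l.
      a < n \<and> d < n \<and> l \<le> n div gcd d n}"

definition setsum_f :: "(nat \<Rightarrow> complex) \<Rightarrow> nat set \<Rightarrow> complex" where
  "setsum_f f A = (\<Sum>x\<in>A. f x)"

definition T_f :: "nat \<Rightarrow> (nat \<Rightarrow> complex) \<Rightarrow> real" where
  "T_f n f = Max ((\<lambda>A. cmod (setsum_f f A)) ` ap_family n)"

definition fourier :: "nat \<Rightarrow> (nat \<Rightarrow> complex) \<Rightarrow> nat \<Rightarrow> complex" where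
  "fourier n f s = (\<Sum>x<n. f x * exp (- 2 * pi * \<i> * of_nat x * of_nat s / of_nat n))"

definition g_f :: "nat \<Rightarrow> (nat \<Rightarrow> complex) \<Rightarrow> nat \<Rightarrow> nat \<Rightarrow> complex" where
  "g_f n f a r = (\<Sum>x\<in>{x. x < n \<and> (\<exists>j<n. x = (a + j * r) mod n)}. f x)"

definition G_f :: "nat \<Rightarrow> (nat \<Rightarrow> complex) \<Rightarrow> nat \<Rightarrow> real" where
  "G_f n f r = (\<Sum>a<r. (cmod (g_f n f a r))\<^sup>2)"

end

theory Submission
  imports Defs
begin

(* Let P_d(a) = f(a) + f(a + d) + ... + f(a + (m - 1) d).  By Parseval,
   n * sum_d sum_a |P_d(a)|^2 = sum_r |fhat(r)|^2 K(r) with K(r) = sum_d |sum_(j<m) e(j d r / n)|^2;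
   the diagonal j = j' gives K(r) >= n m, and the gcd(r, n) differences d that are multiples of
   n / gcd(r, n) give K(r) >= m^2 gcd(r, n).  For the upper bound fix d, let k = n / gcd(d, n) be the
   period of j |-> a + j d and write m = q k + s with s < k.  Then P_d(a) = q C(a) + R(a), where
   C(a) = g_f(a, gcd(d, n)) is a full-period sum and R(a) a progression of length s < k, so |R(a)| <= T_f.
   Since C is invariant under translation by d, the cross term sum_a R(a) conj(C(a)) equals
   (s / k) sum_a |C(a)|^2, whence sum_a |P_d(a)|^2 <= n T_f^2 + (m^2 / k) G_f(n / k) when k < m, and
   <= n T_f^2 when k >= m.  Exactly phi(k) differences d have n / gcd(d, n) = k. *)

section \<open>Roots of unity and periodic extension\<close>

definition root_unity :: "nat \<Rightarrow> int \<Rightarrow> complex" where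
  "root_unity n t = exp (2 * pi * \<i> * of_int t / of_nat n)"

lemma root_unity_add: "root_unity n (a + b) = root_unity n a * root_unity n b"
  unfolding root_unity_def by (simp add: exp_add [symmetric] add_divide_distrib distrib_left)

lemma cnj_root_unity: "cnj (root_unity n t) = root_unity n (- t)"
  unfolding root_unity_def by (simp add: exp_cnj)

lemma root_unity_mult_of_nat: "root_unity n (t * int s) = root_unity n t ^ s"
  unfolding root_unity_def by (simp add: exp_of_nat_mult [symmetric] field_simps)

lemma root_unity_eq_1_iff:
  assumes "n > 0"
  shows "root_unity n t = 1 \<longleftrightarrow> int n dvd t"
proof
  assume "root_unity n t = 1"
  then obtain k :: int where "Im (2 * pi * \<i> * of_int t / of_nat n) = of_int (2 * k) * pi"
    unfolding root_unity_def exp_eq_1 by blast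
  then have "real_of_int t = real n * of_int k"
    using assms pi_gt_zero by (simp add: field_simps)
  then have "t = int n * k"
    by (metis of_int_eq_iff of_int_mult of_int_of_nat_eq)
  then show "int n dvd t" by simp
next
  assume "int n dvd t"
  then obtain k where "t = int n * k" by (elim dvdE)
  then have "root_unity n t = exp (\<i> * (of_int k * (of_real pi * 2)))"
    unfolding root_unity_def using assms by (simp add: field_simps)
  then show "root_unity n t = 1" by simp
qed

lemma sum_root_unity_powers:
  assumes "n > 0"
  shows "(\<Sum>s<n. root_unity n (t * int s)) = (if int n dvd t then of_nat n else 0)"
proof (cases "int n dvd t")
  case True
  then have "root_unity n (t * int s) = 1" for s
    by (simp add: root_unity_eq_1_iff [OF assms])
  with True show ?thesis by simp
next
  case False
  have "root_unity n t ^ n = 1"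
    using root_unity_eq_1_iff [OF assms, of "t * int n"] by (simp add: root_unity_mult_of_nat)
  with False show ?thesis
    by (simp add: root_unity_mult_of_nat sum_gp_strict root_unity_eq_1_iff [OF assms])
qed

definition periodic_ext :: "nat \<Rightarrow> (nat \<Rightarrow> complex) \<Rightarrow> int \<Rightarrow> complex" where
  "periodic_ext n f x = f (nat (x mod int n))"

lemma periodic_ext_of_nat [simp]: "x < n \<Longrightarrow> periodic_ext n f (int x) = f x"
  unfolding periodic_ext_def by simp

lemma periodic_ext_mod [simp]: "periodic_ext n f (x mod int n) = periodic_ext n f x"
  unfolding periodic_ext_def by simp

lemma periodic_ext_mod_add [simp]: "periodic_ext n f (x mod int n + y) = periodic_ext n f (x + y)"
  unfolding periodic_ext_def by (simp add: mod_add_left_eq)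

lemma periodic_ext_add_dvd: "int n dvd t \<Longrightarrow> periodic_ext n f (x + t) = periodic_ext n f x"
  unfolding periodic_ext_def by (metis mod_add_right_eq add.right_neutral dvd_imp_mod_0)

lemma sum_residues_shift:
  fixes \<phi> :: "int \<Rightarrow> 'a::comm_monoid_add"
  assumes "n > 0" and periodic: "\<And>x. \<phi> (x mod int n) = \<phi> x"
  shows "(\<Sum>a<n. \<phi> (int a + t)) = (\<Sum>a<n. \<phi> (int a))"
proof (rule sum.reindex_bij_witness [where j = "\<lambda>a. nat ((int a + t) mod int n)"
                                        and i = "\<lambda>b. nat ((int b - t) mod int n)"])
  fix a assume "a \<in> {..<n}"
  then show "nat ((int (nat ((int a + t) mod int n)) - t) mod int n) = a"
    using assms(1) by (simp add: mod_diff_left_eq)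
  show "nat ((int a + t) mod int n) \<in> {..<n}"
    using assms(1) by (simp add: nat_less_iff)
  show "\<phi> (int (nat ((int a + t) mod int n))) = \<phi> (int a + t)"
    using assms(1) by (simp add: periodic)
next
  fix b assume "b \<in> {..<n}"
  then show "nat ((int (nat ((int b - t) mod int n)) + t) mod int n) = b"
    using assms(1) by (simp add: mod_add_left_eq)
  show "nat ((int b - t) mod int n) \<in> {..<n}"
    using assms(1) by (simp add: nat_less_iff)
qed

lemma sum_select_residue:
  assumes "n > 0"
  shows "(\<Sum>x<n. if int n dvd (int x - t) then g x else 0) = g (nat (t mod int n))"
proof -
  have "int n dvd (int x - t) \<longleftrightarrow> x = nat (t mod int n)" if "x < n" for x
    using that assms by (auto simp: mod_eq_dvd_iff [symmetric])
  then have "(\<Sum>x<n. if int n dvd (int x - t) then g x else 0)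
      = (\<Sum>x<n. if x = nat (t mod int n) then g x else 0)"
    by (intro sum.cong) auto
  also have "\<dots> = g (nat (t mod int n))"
    using assms by (simp add: nat_less_iff)
  finally show ?thesis .
qed

section \<open>The Fourier side\<close>

lemma fourier_eq_root_unity: "fourier n f s = (\<Sum>x<n. f x * root_unity n (- (int x * int s)))"
  unfolding fourier_def root_unity_def by (simp add: field_simps)

lemma norm_fourier_sq:
  "of_real ((cmod (fourier n f s))\<^sup>2)
     = (\<Sum>x<n. \<Sum>y<n. f x * cnj (f y) * root_unity n ((int y - int x) * int s))"
proof -
  have "of_real ((cmod (fourier n f s))\<^sup>2) = fourier n f s * cnj (fourier n f s)"
    by (rule complex_norm_square)
  also have "\<dots> = (\<Sum>x<n. \<Sum>y<n. f x * root_unity n (- (int x * int s))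
                                   * (cnj (f y) * root_unity n (int y * int s)))"
    unfolding fourier_eq_root_unity cnj_sum sum_product by (simp add: cnj_root_unity)
  also have "\<dots> = (\<Sum>x<n. \<Sum>y<n. f x * cnj (f y) * root_unity n ((int y - int x) * int s))"
    by (intro sum.cong refl) (simp add: root_unity_add [symmetric] algebra_simps)
  finally show ?thesis .
qed

definition autocorrelation :: "nat \<Rightarrow> (nat \<Rightarrow> complex) \<Rightarrow> int \<Rightarrow> complex" where
  "autocorrelation n f t = (\<Sum>y<n. periodic_ext n f (int y + t) * cnj (f y))"

lemma sum_norm_fourier_sq_root_unity:
  assumes "n > 0"
  shows "(\<Sum>s<n. of_real ((cmod (fourier n f s))\<^sup>2) * root_unity n (t * int s))
           = of_nat n * autocorrelation n f t"
proof -
  have shift: "root_unity n ((int y - int x) * int s) * root_unity n (t * int s)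
      = root_unity n ((int y - int x + t) * int s)" for x y s
    by (simp add: root_unity_add [symmetric] distrib_right)
  have "(\<Sum>s<n. of_real ((cmod (fourier n f s))\<^sup>2) * root_unity n (t * int s))
      = (\<Sum>s<n. \<Sum>y<n. \<Sum>x<n. f x * cnj (f y) * root_unity n ((int y - int x + t) * int s))"
    unfolding norm_fourier_sq sum_distrib_right
    by (subst sum.swap) (simp only: mult.assoc shift)
  also have "\<dots> = (\<Sum>y<n. \<Sum>x<n. f x * cnj (f y) * (\<Sum>s<n. root_unity n ((int y - int x + t) * int s)))"
    unfolding sum_distrib_left by (subst sum.swap) (rule sum.cong [OF refl], rule sum.swap)
  also have "\<dots> = (\<Sum>y<n. of_nat n * cnj (f y) * (\<Sum>x<n. if int n dvd (int x - (int y + t)) then f x else 0))"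
  proof -
    have "int n dvd (int y - int x + t) \<longleftrightarrow> int n dvd (int x - (int y + t))" for x y
      by (metis dvd_minus_iff minus_diff_eq diff_diff_eq2 add.commute diff_add_eq)
    then show ?thesis
      unfolding sum_root_unity_powers [OF assms] sum_distrib_left
      by (intro sum.cong refl) (simp add: mult_ac)
  qed
  also have "\<dots> = of_nat n * autocorrelation n f t"
    unfolding sum_select_residue [OF assms] autocorrelation_def periodic_ext_def
    by (simp add: sum_distrib_left mult_ac)
  finally show ?thesis .
qed

definition progression_sum :: "nat \<Rightarrow> (nat \<Rightarrow> complex) \<Rightarrow> nat \<Rightarrow> nat \<Rightarrow> int \<Rightarrow> complex" where
  "progression_sum n f d l a = (\<Sum>j<l. periodic_ext n f (a + int j * int d))"

lemma sum_norm_progression_sum_sq: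
  assumes "n > 0"
  shows "of_real (\<Sum>a<n. (cmod (progression_sum n f d m (int a)))\<^sup>2)
           = (\<Sum>j<m. \<Sum>j'<m. autocorrelation n f ((int j - int j') * int d))"
proof -
  have shift: "(\<Sum>a<n. periodic_ext n f (int a + int j * int d) * cnj (periodic_ext n f (int a + int j' * int d)))
      = autocorrelation n f ((int j - int j') * int d)" for j j'
  proof -
    let ?\<phi> = "\<lambda>x. periodic_ext n f (x + (int j - int j') * int d) * cnj (periodic_ext n f x)"
    have "(\<Sum>a<n. ?\<phi> (int a + int j' * int d)) = (\<Sum>a<n. ?\<phi> (int a))"
      by (rule sum_residues_shift [OF assms]) simp
    then show ?thesis
      unfolding autocorrelation_def by (simp add: algebra_simps)
  qed
  have "of_real (\<Sum>a<n. (cmod (progression_sum n f d m (int a)))\<^sup>2)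
      = (\<Sum>a<n. \<Sum>j<m. \<Sum>j'<m. periodic_ext n f (int a + int j * int d)
                                  * cnj (periodic_ext n f (int a + int j' * int d)))"
    unfolding of_real_sum complex_norm_square progression_sum_def cnj_sum sum_product ..
  also have "\<dots> = (\<Sum>j<m. \<Sum>j'<m. \<Sum>a<n. periodic_ext n f (int a + int j * int d)
                                  * cnj (periodic_ext n f (int a + int j' * int d)))"
    by (subst sum.swap) (rule sum.cong [OF refl], rule sum.swap)
  also have "\<dots> = (\<Sum>j<m. \<Sum>j'<m. autocorrelation n f ((int j - int j') * int d))"
    by (simp only: shift)
  finally show ?thesis .
qed

definition progression_kernel :: "nat \<Rightarrow> nat \<Rightarrow> nat \<Rightarrow> real" where
  "progression_kernel n m s = (\<Sum>d<n. (cmod (\<Sum>j<m. root_unity n (int j * int d * int s)))\<^sup>2)"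

lemma progression_kernel_expand:
  "of_real (progression_kernel n m s)
     = (\<Sum>d<n. \<Sum>j<m. \<Sum>j'<m. root_unity n ((int j - int j') * int d * int s))"
  unfolding progression_kernel_def of_real_sum complex_norm_square cnj_sum sum_product cnj_root_unity
  by (intro sum.cong refl) (simp add: root_unity_add [symmetric] algebra_simps)

lemma sum_norm_fourier_sq_kernel:
  assumes "n > 0"
  shows "(\<Sum>s<n. (cmod (fourier n f s))\<^sup>2 * progression_kernel n m s)
           = real n * (\<Sum>d<n. \<Sum>a<n. (cmod (progression_sum n f d m (int a)))\<^sup>2)"
proof -
  let ?F = "\<lambda>s. of_real ((cmod (fourier n f s))\<^sup>2) :: complex"
  have "of_real (\<Sum>s<n. (cmod (fourier n f s))\<^sup>2 * progression_kernel n m s)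
      = (\<Sum>s<n. \<Sum>d<n. \<Sum>j<m. \<Sum>j'<m. ?F s * root_unity n ((int j - int j') * int d * int s))"
    unfolding of_real_sum of_real_mult progression_kernel_expand sum_distrib_left ..
  also have "\<dots> = (\<Sum>d<n. \<Sum>j<m. \<Sum>j'<m. \<Sum>s<n. ?F s * root_unity n ((int j - int j') * int d * int s))"
    by (subst sum.swap, rule sum.cong [OF refl], subst sum.swap, rule sum.cong [OF refl], rule sum.swap)
  also have "\<dots> = (\<Sum>d<n. \<Sum>j<m. \<Sum>j'<m. of_nat n * autocorrelation n f ((int j - int j') * int d))"
    by (simp only: sum_norm_fourier_sq_root_unity [OF assms])
  also have "\<dots> = of_nat n * (\<Sum>d<n. of_real (\<Sum>a<n. (cmod (progression_sum n f d m (int a)))\<^sup>2))"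
    by (simp only: sum_norm_progression_sum_sq [OF assms] sum_distrib_left)
  also have "\<dots> = of_real (real n * (\<Sum>d<n. \<Sum>a<n. (cmod (progression_sum n f d m (int a)))\<^sup>2))"
    by (simp only: of_real_mult of_real_of_nat_eq of_real_sum)
  finally show ?thesis by (simp only: of_real_eq_iff)
qed

lemma progression_kernel_eq_count:
  assumes "n > 0"
  shows "progression_kernel n m s
           = (\<Sum>j<m. \<Sum>j'<m. if int n dvd ((int j - int j') * int s) then real n else 0)"
proof -
  have "of_real (progression_kernel n m s)
      = (\<Sum>j<m. \<Sum>j'<m. \<Sum>d<n. root_unity n ((int j - int j') * int s * int d))"
    unfolding progression_kernel_expand
    by (subst sum.swap, rule sum.cong [OF refl], rule sum.swap [THEN trans])
       (simp add: mult_ac)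
  also have "\<dots> = of_real (\<Sum>j<m. \<Sum>j'<m. if int n dvd ((int j - int j') * int s) then real n else 0)"
    unfolding sum_root_unity_powers [OF assms] of_real_sum by (intro sum.cong refl) simp
  finally show ?thesis by (simp only: of_real_eq_iff)
qed

lemma progression_kernel_ge_diagonal:
  assumes "n > 0"
  shows "real n * real m \<le> progression_kernel n m s"
proof -
  have "real n \<le> (\<Sum>j'<m. if int n dvd ((int j - int j') * int s) then real n else 0)"
    if "j < m" for j
    using member_le_sum [of j "{..<m}" "\<lambda>j'. if int n dvd ((int j - int j') * int s) then real n else 0"]
      that by simp
  then have "(\<Sum>j<m. real n) \<le> progression_kernel n m s"
    unfolding progression_kernel_eq_count [OF assms] by (intro sum_mono) auto
  then show ?thesis by (simp add: mult.commute)
qed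

lemma progression_kernel_ge_gcd:
  assumes "n > 0"
  shows "(real m)\<^sup>2 * real (gcd s n) \<le> progression_kernel n m s"
proof -
  define g where "g = gcd s n"
  define q where "q = n div g"
  have n_eq: "n = g * q" unfolding q_def g_def by simp
  then have "q > 0" using assms by (metis gr0I mult_0_right)
  \<comment> \<open>each of the gcd s n differences d that are multiples of n / gcd s n contributes m^2\<close>
  let ?D = "(\<lambda>i. i * q) ` {..<g}"
  have card_D: "card ?D = g"
    using \<open>q > 0\<close> by (subst card_image) (auto simp: inj_on_def)
  have D_sub: "?D \<subseteq> {..<n}"
    using n_eq \<open>q > 0\<close> by auto
  have full: "(cmod (\<Sum>j<m. root_unity n (int j * int d * int s)))\<^sup>2 = (real m)\<^sup>2" if "d \<in> ?D" for d
  proof -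
    obtain i where d: "d = i * q" using \<open>d \<in> ?D\<close> by auto
    obtain s' where s: "s = g * s'" unfolding g_def by (metis dvd_def gcd_dvd1)
    have "int n dvd int j * int d * int s" for j
      unfolding d s n_eq by (simp add: mult_ac)
    then have "root_unity n (int j * int d * int s) = 1" for j
      using root_unity_eq_1_iff [OF assms] by blast
    then show ?thesis by simp
  qed
  have "(real m)\<^sup>2 * real g = (\<Sum>d\<in>?D. (cmod (\<Sum>j<m. root_unity n (int j * int d * int s)))\<^sup>2)"
    using full card_D by simp
  also have "\<dots> \<le> progression_kernel n m s"
    unfolding progression_kernel_def by (rule sum_mono2) (use D_sub in auto)
  finally show ?thesis unfolding g_def .
qed

lemma sum_norm_fourier_sq_weighted_le:
  assumes "n > 0"
  shows "(\<Sum>r<n. (cmod (fourier n f r))\<^sup>2 * max ((real m)\<^sup>2 * real (gcd r n) / real n) (real m))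
           \<le> (\<Sum>d<n. \<Sum>a<n. (cmod (progression_sum n f d m (int a)))\<^sup>2)"
proof -
  have "max ((real m)\<^sup>2 * real (gcd r n) / real n) (real m) \<le> progression_kernel n m r / real n"
    for r
    using progression_kernel_ge_diagonal [OF assms, of m r] progression_kernel_ge_gcd [OF assms, of m r]
      assms by (simp add: field_simps)
  then have "(\<Sum>r<n. (cmod (fourier n f r))\<^sup>2 * max ((real m)\<^sup>2 * real (gcd r n) / real n) (real m))
      \<le> (\<Sum>r<n. (cmod (fourier n f r))\<^sup>2 * progression_kernel n m r) / real n"
    unfolding sum_divide_distrib by (intro sum_mono) (simp add: mult_left_mono flip: times_divide_eq_right)
  also have "\<dots> = (\<Sum>d<n. \<Sum>a<n. (cmod (progression_sum n f d m (int a)))\<^sup>2)"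
    unfolding sum_norm_fourier_sq_kernel [OF assms] using assms by simp
  finally show ?thesis .
qed

section \<open>Progressions no longer than a period\<close>

lemma inj_on_progression_mod:
  fixes n d a l :: nat
  assumes "n > 0" and "l \<le> n div gcd d n"
  shows "inj_on (\<lambda>k. (a + k * d) mod n) {..<l}"
proof -
  define g where "g = gcd d n"
  define q where "q = n div g"
  have g: "g > 0" "n = q * g" "d = d div g * g"
    using assms(1) unfolding q_def g_def by simp_all
  have coprime: "coprime q (d div g)"
    unfolding q_def g_def using div_gcd_coprime [of n d] assms(1)
    by (simp add: gcd.commute coprime_commute)
  have eq: "k1 = k2" if "k2 \<le> k1" "k1 < l" "(a + k1 * d) mod n = (a + k2 * d) mod n" for k1 k2
  proof -
    have "n dvd (k1 - k2) * d"
      using that mod_eq_dvd_iff_nat [of "a + k2 * d" "a + k1 * d" n]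
      by (simp add: diff_mult_distrib)
    then have "q * g dvd ((k1 - k2) * (d div g)) * g"
      using g by (metis mult.assoc)
    then have "q dvd (k1 - k2) * (d div g)"
      using g(1) by simp
    then have "q dvd k1 - k2"
      using coprime coprime_dvd_mult_left_iff by blast
    moreover have "k1 - k2 < q"
      using that assms(2) unfolding q_def g_def by linarith
    ultimately have "k1 - k2 = 0"
      using nat_dvd_not_less by blast
    then show ?thesis
      using that(1) by simp
  qed
  show ?thesis
  proof (rule inj_onI)
    fix k1 k2 assume "k1 \<in> {..<l}" "k2 \<in> {..<l}" "(a + k1 * d) mod n = (a + k2 * d) mod n"
    then show "k1 = k2"
      using eq [of k2 k1] eq [of k1 k2] by (cases "k2 \<le> k1") auto
  qed
qed

lemma finite_ap_family: "finite (ap_family n)"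
proof -
  have "ap_family n \<subseteq> Pow {..<n}"
    unfolding ap_family_def by auto
  then show ?thesis
    by (rule finite_subset) simp
qed

lemma progression_sum_eq_sum_image:
  assumes "n > 0" and "l \<le> n div gcd d n"
  shows "progression_sum n f d l a = sum f ((\<lambda>k. (nat (a mod int n) + k * d) mod n) ` {..<l})"
proof -
  define b where "b = nat (a mod int n)"
  have "int ((b + j * d) mod n) = (a + int j * int d) mod int n" for j
    unfolding b_def using assms(1) by (simp add: zmod_int mod_add_left_eq)
  then have "nat ((a + int j * int d) mod int n) = (b + j * d) mod n" for j
    by (metis nat_int)
  then show ?thesis
    unfolding progression_sum_def periodic_ext_def b_def [symmetric]
    by (simp add: sum.reindex [OF inj_on_progression_mod [OF assms]])
qed

lemma norm_progression_sum_le_T_f: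
  assumes "n > 0" and "d < n" and "l \<le> n div gcd d n"
  shows "cmod (progression_sum n f d l a) \<le> T_f n f"
proof -
  define A where "A = (\<lambda>k. (nat (a mod int n) + k * d) mod n) ` {..<l}"
  have "nat (a mod int n) < n"
    using assms(1) by (simp add: nat_less_iff)
  then have "A \<in> ap_family n"
    unfolding ap_family_def A_def using assms(2,3) by blast
  then have "cmod (setsum_f f A) \<in> (\<lambda>A. cmod (setsum_f f A)) ` ap_family n"
    by (rule imageI)
  moreover have "setsum_f f A = progression_sum n f d l a"
    unfolding setsum_f_def A_def by (rule progression_sum_eq_sum_image [OF assms(1,3), symmetric])
  ultimately show ?thesis
    unfolding T_f_def by (simp add: Max_ge finite_ap_family)
qed

section \<open>Progressions longer than a period\<close>

lemma sum_lessThan_add: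
  fixes k t :: nat
  shows "(\<Sum>j<k + t. h j) = (\<Sum>j<k. h j) + (\<Sum>j<t. h (k + j))"
  by (induction t) (simp_all add: add.assoc)

lemma sum_lessThan_periodic:
  fixes h :: "nat \<Rightarrow> 'a::semiring_1"
  assumes "\<And>j. h (j + k) = h j"
  shows "(\<Sum>j<q * k + r. h j) = of_nat q * (\<Sum>j<k. h j) + (\<Sum>j<r. h j)"
proof (induction q)
  case (Suc q)
  have "(\<Sum>j<Suc q * k + r. h j) = (\<Sum>j<k. h j) + (\<Sum>j<q * k + r. h (k + j))"
    using sum_lessThan_add [where k = k and t = "q * k + r" and h = h] by (simp add: add.assoc)
  also have "(\<Sum>j<q * k + r. h (k + j)) = (\<Sum>j<q * k + r. h j)"
    using assms by (simp add: add.commute)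
  also have "\<dots> = of_nat q * (\<Sum>j<k. h j) + (\<Sum>j<r. h j)"
    by (rule Suc.IH)
  finally show ?case
    by (simp only: of_nat_Suc distrib_right mult_1 add.assoc)
qed simp

lemma dvd_div_gcd_mult:
  fixes n d :: nat
  shows "n dvd n div gcd d n * d"
proof -
  have "n div gcd d n * d = n * (d div gcd d n)"
    by (simp add: div_mult_swap dvd_div_mult)
  then show ?thesis by simp
qed

lemma progression_sum_full_periods:
  "progression_sum n f d (q * (n div gcd d n) + r) a
     = of_nat q * progression_sum n f d (n div gcd d n) a + progression_sum n f d r a"
  unfolding progression_sum_def
proof (rule sum_lessThan_periodic)
  fix j
  let ?k = "n div gcd d n"
  have dvd: "int n dvd int ?k * int d"
    using dvd_div_gcd_mult [of n d] by (simp flip: of_nat_mult)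
  have "a + int (j + ?k) * int d = (a + int j * int d) + int ?k * int d"
    by (simp add: algebra_simps)
  then show "periodic_ext n f (a + int (j + ?k) * int d) = periodic_ext n f (a + int j * int d)"
    by (simp only: periodic_ext_add_dvd [OF dvd])
qed

lemma sum_progression_sum_mult_invariant:
  assumes "n > 0" and h_mod: "\<And>x. h (x mod int n) = h x" and h_shift: "\<And>x. h (x + int d) = h x"
  shows "(\<Sum>a<n. progression_sum n f d l (int a) * h (int a)) = of_nat l * (\<Sum>a<n. f a * h (int a))"
proof -
  have h_shifts: "h (x + int j * int d) = h x" for x j
  proof (induction j arbitrary: x)
    case (Suc j)
    then show ?case
      using h_shift [of "x + int j * int d"] by (simp add: algebra_simps)
  qed simp
  have shift_j: "(\<Sum>a<n. periodic_ext n f (int a + int j * int d) * h (int a)) = (\<Sum>a<n. f a * h (int a))" for j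
  proof -
    let ?\<phi> = "\<lambda>x. periodic_ext n f x * h x"
    have "(\<Sum>a<n. ?\<phi> (int a + int j * int d)) = (\<Sum>a<n. ?\<phi> (int a))"
      by (rule sum_residues_shift [OF assms(1)]) (simp add: h_mod)
    then show ?thesis
      by (simp add: h_shifts)
  qed
  have "(\<Sum>a<n. progression_sum n f d l (int a) * h (int a))
      = (\<Sum>j<l. \<Sum>a<n. periodic_ext n f (int a + int j * int d) * h (int a))"
    unfolding progression_sum_def sum_distrib_right by (rule sum.swap)
  also have "\<dots> = of_nat l * (\<Sum>a<n. f a * h (int a))"
    by (simp only: shift_j sum_constant card_lessThan)
  finally show ?thesis .
qed

lemma residue_class_eq_image:
  fixes n g c :: nat
  assumes "g dvd n" and "c < g"
  shows "{x. x < n \<and> x mod g = c} = (\<lambda>i. c + i * g) ` {..<n div g}"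
proof (intro equalityI subsetI)
  fix x assume "x \<in> {x. x < n \<and> x mod g = c}"
  then have x: "x < n" "x mod g = c"
    by auto
  then have "x = c + x div g * g"
    by (metis mod_div_mult_eq)
  moreover have "x div g < n div g"
    using x(1) assms by (auto elim!: dvdE simp: div_less_iff_less_mult)
  ultimately show "x \<in> (\<lambda>i. c + i * g) ` {..<n div g}"
    by blast
next
  fix x assume "x \<in> (\<lambda>i. c + i * g) ` {..<n div g}"
  then obtain i where "i < n div g" and x: "x = c + i * g"
    by auto
  then have "x < Suc i * g"
    using assms(2) by simp
  also have "\<dots> \<le> n"
    using \<open>i < n div g\<close> assms by (auto elim!: dvdE simp: mult_le_mono1 simp del: mult_Suc)
  finally show "x \<in> {x. x < n \<and> x mod g = c}"
    unfolding x using assms(2) by simp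
qed

lemma card_residue_class:
  fixes n g c :: nat
  assumes "g dvd n" and "c < g"
  shows "card {x. x < n \<and> x mod g = c} = n div g"
  unfolding residue_class_eq_image [OF assms] using assms(2)
  by (subst card_image) (auto simp: inj_on_def)

lemma residue_class_eq_orbit:
  fixes n g c :: nat
  assumes "g dvd n" and "c < g"
  shows "{x. x < n \<and> (\<exists>j<n. x = (c + j * g) mod n)} = {x. x < n \<and> x mod g = c}"
proof (intro equalityI subsetI)
  fix x assume "x \<in> {x. x < n \<and> (\<exists>j<n. x = (c + j * g) mod n)}"
  then obtain j where "x < n" and x: "x = (c + j * g) mod n"
    by auto
  have "x mod g = c"
    unfolding x using assms by (simp add: mod_mod_cancel)
  with \<open>x < n\<close> show "x \<in> {x. x < n \<and> x mod g = c}"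
    by simp
next
  fix x assume "x \<in> {x. x < n \<and> x mod g = c}"
  then have "x < n" and "x mod g = c"
    by auto
  then have "x = (c + x div g * g) mod n"
    by (metis mod_div_mult_eq mod_less)
  moreover have "x div g < n"
    using \<open>x < n\<close> by (meson div_le_dividend le_less_trans)
  ultimately show "x \<in> {x. x < n \<and> (\<exists>j<n. x = (c + j * g) mod n)}"
    using \<open>x < n\<close> by blast
qed

lemma progression_image_eq_residue_class:
  fixes n d b :: nat
  assumes "n > 0"
  shows "(\<lambda>j. (b + j * d) mod n) ` {..<n div gcd d n} = {x. x < n \<and> x mod gcd d n = b mod gcd d n}"
proof (rule card_subset_eq)
  let ?g = "gcd d n"
  show "finite {x. x < n \<and> x mod ?g = b mod ?g}"
    by simp
  show "(\<lambda>j. (b + j * d) mod n) ` {..<n div ?g} \<subseteq> {x. x < n \<and> x mod ?g = b mod ?g}"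
  proof
    fix x assume "x \<in> (\<lambda>j. (b + j * d) mod n) ` {..<n div ?g}"
    then obtain j where x: "x = (b + j * d) mod n"
      by auto
    have "x mod ?g = (b + j * d) mod ?g"
      unfolding x by (simp add: mod_mod_cancel)
    also have "\<dots> = b mod ?g"
      by (metis add.right_neutral dvd_imp_mod_0 mod_add_right_eq dvd_mult gcd_dvd1)
    finally show "x \<in> {x. x < n \<and> x mod ?g = b mod ?g}"
      unfolding x using assms by simp
  qed
  have "?g > 0"
    using assms by simp
  then show "card ((\<lambda>j. (b + j * d) mod n) ` {..<n div ?g}) = card {x. x < n \<and> x mod ?g = b mod ?g}"
    by (simp add: card_image inj_on_progression_mod [OF assms] card_residue_class)
qed

lemma progression_sum_full_period:
  assumes "n > 0"
  shows "progression_sum n f d (n div gcd d n) a = g_f n f (nat (a mod int (gcd d n))) (gcd d n)"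
proof -
  let ?g = "gcd d n"
  define b where "b = nat (a mod int n)"
  have residue: "nat (a mod int ?g) = b mod ?g"
  proof -
    have "int (b mod ?g) = a mod int n mod int ?g"
      unfolding b_def using assms by (simp add: zmod_int)
    also have "\<dots> = a mod int ?g"
      by (simp add: mod_mod_cancel)
    finally show ?thesis
      by simp
  qed
  have "?g > 0"
    using assms by simp
  then show ?thesis
    unfolding progression_sum_eq_sum_image [OF assms order.refl] b_def [symmetric] g_f_def residue
    by (simp add: progression_image_eq_residue_class [OF assms] residue_class_eq_orbit)
qed

lemma progression_sum_mod [simp]:
  "progression_sum n f d l (x mod int n) = progression_sum n f d l x"
  unfolding progression_sum_def by simp

lemma sum_norm_full_period_sq:
  assumes "n > 0"
  shows "(\<Sum>a<n. (cmod (progression_sum n f d (n div gcd d n) (int a)))\<^sup>2)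
           = real (n div gcd d n) * G_f n f (gcd d n)"
proof -
  let ?g = "gcd d n"
  let ?h = "\<lambda>b. (cmod (g_f n f b ?g))\<^sup>2"
  have "n = n div ?g * ?g"
    by simp
  then have "(\<Sum>a<n. ?h (a mod ?g)) = of_nat (n div ?g) * (\<Sum>b<?g. ?h b)"
    using sum_lessThan_periodic [where h = "\<lambda>a. ?h (a mod ?g)" and k = ?g and q = "n div ?g" and r = 0]
    by simp
  then show ?thesis
    unfolding progression_sum_full_period [OF assms] G_f_def by (simp add: nat_mod_distrib)
qed

lemma sum_norm_progression_sum_sq_split:
  fixes n d q r :: nat
  defines "k \<equiv> n div gcd d n"
  assumes "n > 0"
  shows "(\<Sum>a<n. (cmod (progression_sum n f d (q * k + r) (int a)))\<^sup>2)
           = ((real q)\<^sup>2 + 2 * real q * real r / real k) * (\<Sum>a<n. (cmod (progression_sum n f d k (int a)))\<^sup>2)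
             + (\<Sum>a<n. (cmod (progression_sum n f d r (int a)))\<^sup>2)"
proof -
  let ?C = "progression_sum n f d k"
  let ?R = "progression_sum n f d r"
  define X where "X = (\<Sum>a<n. f a * cnj (?C (int a)))"
  define SC where "SC = (\<Sum>a<n. (cmod (?C (int a)))\<^sup>2)"
  define SR where "SR = (\<Sum>a<n. (cmod (?R (int a)))\<^sup>2)"
  have "k > 0"
    using assms(2) unfolding k_def by (simp add: div_greater_zero_iff)
  \<comment> \<open>the cross terms collapse because a full-period sum is invariant under translation by d\<close>
  have invariant: "(\<Sum>a<n. progression_sum n f d l (int a) * cnj (?C (int a))) = of_nat l * X" for l
  proof (unfold X_def, rule sum_progression_sum_mult_invariant [OF assms(2)])
    fix x
    show "cnj (?C (x mod int n)) = cnj (?C x)"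
      by simp
    have "(x + int d) mod int (gcd d n) = x mod int (gcd d n)"
      by (simp add: mod_add_right_eq [symmetric] dvd_imp_mod_0 flip: of_nat_dvd_iff)
    then show "cnj (?C (x + int d)) = cnj (?C x)"
      unfolding k_def progression_sum_full_period [OF assms(2)] by simp
  qed
  have SC_eq: "of_real SC = (\<Sum>a<n. ?C (int a) * cnj (?C (int a)))"
    unfolding SC_def of_real_sum complex_norm_square ..
  have SR_eq: "of_real SR = (\<Sum>a<n. ?R (int a) * cnj (?R (int a)))"
    unfolding SR_def of_real_sum complex_norm_square ..
  have X: "X = of_real (SC / real k)"
    using SC_eq invariant [of k] \<open>k > 0\<close> by (simp add: field_simps)
  have "of_real (\<Sum>a<n. (cmod (progression_sum n f d (q * k + r) (int a)))\<^sup>2)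
      = (\<Sum>a<n. (of_nat q * ?C (int a) + ?R (int a)) * cnj (of_nat q * ?C (int a) + ?R (int a)))"
    unfolding of_real_sum complex_norm_square k_def progression_sum_full_periods ..
  also have "\<dots> = (of_nat q)\<^sup>2 * (\<Sum>a<n. ?C (int a) * cnj (?C (int a)))
      + of_nat q * (\<Sum>a<n. ?R (int a) * cnj (?C (int a)))
      + of_nat q * cnj (\<Sum>a<n. ?R (int a) * cnj (?C (int a)))
      + (\<Sum>a<n. ?R (int a) * cnj (?R (int a)))"
    by (simp add: sum_distrib_left sum.distrib [symmetric] cnj_sum algebra_simps power2_eq_square)
  also have "\<dots> = of_real (((real q)\<^sup>2 + 2 * real q * real r / real k) * SC + SR)"
    unfolding invariant X SC_eq [symmetric] SR_eq [symmetric]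
    using \<open>k > 0\<close> by (simp add: field_simps power2_eq_square)
  finally show ?thesis
    unfolding SC_def SR_def by (simp only: of_real_eq_iff)
qed

lemma G_f_nonneg: "0 \<le> G_f n f r"
  unfolding G_f_def by (simp add: sum_nonneg)

lemma sum_norm_progression_sum_sq_le_T_f:
  assumes "n > 0" and "d < n" and "l \<le> n div gcd d n"
  shows "(\<Sum>a<n. (cmod (progression_sum n f d l (int a)))\<^sup>2) \<le> real n * (T_f n f)\<^sup>2"
proof -
  have "(\<Sum>a<n. (cmod (progression_sum n f d l (int a)))\<^sup>2) \<le> (\<Sum>a<n. (T_f n f)\<^sup>2)"
    using norm_progression_sum_le_T_f [OF assms] by (intro sum_mono power_mono) auto
  then show ?thesis
    by simp
qed

lemma sum_norm_progression_sum_sq_le: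
  assumes "n > 0" and "d < n"
  shows "(\<Sum>a<n. (cmod (progression_sum n f d m (int a)))\<^sup>2)
           \<le> real n * (T_f n f)\<^sup>2
             + (if n div gcd d n < m then (real m)\<^sup>2 / real (n div gcd d n) * G_f n f (gcd d n) else 0)"
proof -
  define k where "k = n div gcd d n"
  have "k > 0"
    using assms(1) unfolding k_def by (simp add: div_greater_zero_iff)
  show ?thesis
  proof (cases "k < m")
    case False
    then show ?thesis
      using sum_norm_progression_sum_sq_le_T_f [OF assms, of m] unfolding k_def by simp
  next
    case True
    define q where "q = m div k"
    define r where "r = m mod k"
    have m: "m = q * k + r" and "r < k"
      unfolding q_def r_def using \<open>k > 0\<close> by simp_all
    have coefficient: "(real q)\<^sup>2 + 2 * real q * real r / real k \<le> (real m / real k)\<^sup>2"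
    proof -
      have "real m / real k = real q + real r / real k"
        using \<open>k > 0\<close> m by (simp add: field_simps)
      then show ?thesis
        using \<open>k > 0\<close> by (simp add: power2_eq_square field_simps)
    qed
    have "(\<Sum>a<n. (cmod (progression_sum n f d m (int a)))\<^sup>2)
        = ((real q)\<^sup>2 + 2 * real q * real r / real k) * (real k * G_f n f (gcd d n))
          + (\<Sum>a<n. (cmod (progression_sum n f d r (int a)))\<^sup>2)"
      unfolding m k_def sum_norm_progression_sum_sq_split [OF assms(1)] sum_norm_full_period_sq [OF assms(1)] ..
    also have "\<dots> \<le> (real m / real k)\<^sup>2 * (real k * G_f n f (gcd d n)) + real n * (T_f n f)\<^sup>2"
      using coefficient sum_norm_progression_sum_sq_le_T_f [OF assms, of r] \<open>r < k\<close> unfolding k_def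
      by (intro add_mono mult_right_mono) (simp_all add: G_f_nonneg)
    also have "(real m / real k)\<^sup>2 * (real k * G_f n f (gcd d n)) = (real m)\<^sup>2 / real k * G_f n f (gcd d n)"
      using \<open>k > 0\<close> by (simp add: power2_eq_square)
    finally show ?thesis
      using True unfolding k_def by simp
  qed
qed

section \<open>Counting differences by their order\<close>

lemma card_div_gcd_eq_totient:
  fixes n k :: nat
  assumes "n > 0" and "k dvd n"
  shows "card {d \<in> {0<..n}. n div gcd d n = k} = totient k"
proof -
  have "k > 0" and "n div k dvd n"
    using assms by (auto intro: dvd_div_mult_self dvd_triv_left dvd_pos_nat)
  have "n div gcd d n = k \<longleftrightarrow> gcd d n = n div k" for d
  proof
    assume "n div gcd d n = k"
    then have "n = gcd d n * k"
      by (metis dvd_mult_div_cancel gcd_dvd2)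
    then show "gcd d n = n div k"
      using \<open>k > 0\<close> by (metis div_mult_self_is_m)
  next
    assume "gcd d n = n div k"
    then show "n div gcd d n = k"
      using assms by (simp add: div_div_eq_right)
  qed
  then have "{d \<in> {0<..n}. n div gcd d n = k} = {d \<in> {0<..n}. gcd d n = n div k}"
    by auto
  then show ?thesis
    using card_gcd_eq_totient [OF assms(1) \<open>n div k dvd n\<close>] assms by (simp add: div_div_eq_right)
qed

lemma sum_lessThan_by_order:
  fixes h :: "nat \<Rightarrow> 'a::comm_semiring_1"
  assumes "n > 0"
  shows "(\<Sum>d<n. h (n div gcd d n)) = (\<Sum>k | k dvd n. of_nat (totient k) * h k)"
proof -
  have "(\<Sum>d<n. h (n div gcd d n)) = (\<Sum>d\<in>{0<..n}. h (n div gcd d n))"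
  proof -
    have "{..<n} = insert 0 {0<..<n}" and "{0<..n} = insert n {0<..<n}"
      using assms by auto
    then show ?thesis
      by simp
  qed
  also have "\<dots> = (\<Sum>k | k dvd n. \<Sum>d | d \<in> {0<..n} \<and> n div gcd d n = k. h (n div gcd d n))"
  proof (rule sum.group [symmetric])
    have "n div gcd d n dvd n" for d
      by (metis dvd_div_mult_self gcd_dvd2 dvd_triv_left)
    then show "(\<lambda>d. n div gcd d n) ` {0<..n} \<subseteq> {k. k dvd n}"
      by auto
  qed (use assms in simp_all)
  also have "\<dots> = (\<Sum>k | k dvd n. \<Sum>d | d \<in> {0<..n} \<and> n div gcd d n = k. h k)"
    by (intro sum.cong) simp_all
  also have "\<dots> = (\<Sum>k | k dvd n. of_nat (totient k) * h k)"
    using card_div_gcd_eq_totient [OF assms] by (intro sum.cong) simp_all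
  finally show ?thesis .
qed

theorem corollary4p4:
  fixes n m :: nat and f :: "nat \<Rightarrow> complex"
  assumes "0 < n" and "0 < m" and "m \<le> n"
  shows "(real n)\<^sup>2 * (T_f n f)\<^sup>2
      + (\<Sum>k\<in>{k. 1 \<le> k \<and> k < m \<and> k dvd n}.
           (real m)\<^sup>2 * real (totient k) / real k * G_f n f (n div k))
    \<ge> (\<Sum>r<n. (cmod (fourier n f r))\<^sup>2 *
           max ((real m)\<^sup>2 * real (gcd r n) / real n) (real m))"
proof -
  define H where "H k = (if k < m then (real m)\<^sup>2 / real k * G_f n f (n div k) else 0)" for k
  have "(\<Sum>r<n. (cmod (fourier n f r))\<^sup>2 * max ((real m)\<^sup>2 * real (gcd r n) / real n) (real m))
      \<le> (\<Sum>d<n. \<Sum>a<n. (cmod (progression_sum n f d m (int a)))\<^sup>2)"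
    by (rule sum_norm_fourier_sq_weighted_le [OF assms(1)])
  also have "\<dots> \<le> (\<Sum>d<n. real n * (T_f n f)\<^sup>2 + H (n div gcd d n))"
  proof (rule sum_mono)
    fix d assume "d \<in> {..<n}"
    have order: "n div (n div gcd d n) = gcd d n"
      using assms(1) by (simp add: div_div_eq_right)
    show "(\<Sum>a<n. (cmod (progression_sum n f d m (int a)))\<^sup>2) \<le> real n * (T_f n f)\<^sup>2 + H (n div gcd d n)"
      unfolding H_def order using \<open>d \<in> {..<n}\<close> by (intro sum_norm_progression_sum_sq_le [OF assms(1)]) simp
  qed
  also have "\<dots> = (real n)\<^sup>2 * (T_f n f)\<^sup>2 + (\<Sum>k | k dvd n. real (totient k) * H k)"
    unfolding sum.distrib sum_lessThan_by_order [OF assms(1)] by (simp add: power2_eq_square)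
  also have "(\<Sum>k | k dvd n. real (totient k) * H k)
      = (\<Sum>k\<in>{k. 1 \<le> k \<and> k < m \<and> k dvd n}. (real m)\<^sup>2 * real (totient k) / real k * G_f n f (n div k))"
    using assms(1)
    by (intro sum.mono_neutral_cong_right) (auto simp: H_def Suc_le_eq dvd_pos_nat)
  finally show ?thesis .
qed

end
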